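(* Let $N\ge2$, $a\in\mathbb{R}$, $\alpha\in(0,1]$, $\sigma_r^2,\sigma_w^2\ge0$. Let $P$ be a symmetric, doubly stochastic, positive semi-definite $N\times N$ matrix with nonnegative entries and eigenvalues $-1<\lambda_N(P)\le\dots\le\lambda_2(P)<\lambda_1(P)=1$, with orthonormal eigenvectors $v_1=\mathbf 1_N/\sqrt N,v_2,\dots,v_N$, and suppose $|a|<1/|\alpha|$ and that $a(P-\alpha I_N)$ has spectral radius less than $1$. Let $\mathcal E=\{\{i,j\}: i\ne j,\ p_{ij}>0\}$ and assume some pair $\{i,j\}$, $i\neq j$, is not in $\mathcal E$. For such a pair and $\epsilon>0$, let $\Delta P(i,j)=-(\mathbf e_i-\mathbf e_j)(\mathbf e_i-\mathbf e_j)^{\mathsf T}$, $P_\epsilon=P+\epsilon\Delta P(i,j)$, $z_k(i,j)=\epsilon\, v_k^{\mathsf T}\Delta P(i,j)v_k$, and $$h_k(i,j)=\frac{z_k(i,j)\big(2(1-\alpha^2a^2)\lambda_k(P)+2a^2\alpha\lambda_k^2(P)\big)}{\big(1-a^2(\lambda_k(P)-\alpha)^2\big)^2}.$$ With $\tilde{\mathrm{MSD}}(M,\alpha)=\frac{\sigma_r^2}{1-a^2(1-\alpha)^2}+\frac1N\sum_{k=1}^N\frac{a^2\alpha^2\sigma_w^2\lambda_k^2(M)}{1-a^2(\lambda_k(M)-\alpha)^2}$, the following hold. (i) For each pair $\{i,j\}\notin\mathcal E$, as $\epsilon\to0$, $$\tilde{\mathrm{MSD}}(P_\epsilon,\alpha)-\tilde{\mathrm{MSD}}(P,\alpha)=\frac{a^2\alpha^2\sigma_w^2}{N}\sum_{k=1}^Nh_k(i,j)+\mathcal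 O(\epsilon^2),$$ so that, for $\epsilon\ll1$, the edge whose addition with weight $\epsilon$ most reduces $\tilde{\mathrm{MSD}}$ is found by solving $\min_{\{i,j\}\notin\mathcal E}\sum_{k=1}^Nh_k(i,j)$. (ii) Letting $\zeta_{\max}=\max_{k>1}|\lambda_k(P)-\alpha|$, $$\min_{\{i,j\}\notin\mathcal E}\sum_{k=1}^Nh_k(i,j)\ \ge\ \min_{\{i,j\}\notin\mathcal E}\frac{-2\epsilon\Big((1-\alpha^2a^2)(p_{ii}+p_{jj})+a^2\alpha\big([P^2]_{ii}+[P^2]_{jj}-2[P^2]_{ij}\big)\Big)}{\big(1-a^2\zeta_{\max}^2\big)^2}.$$
   Context: $\tilde{\mathrm{MSD}}(M,\alpha)$ is the steady-state mean square deviation per agent of the estimator $\tilde{x}_{i,t+1}=a(\sum_jm_{ij}\tilde{x}_{j,t}+\alpha(\sum_jm_{ij}y_{j,t}-\tilde{x}_{i,t}))$ for the model $x_{t+1}=ax_t+r_t$, $y_{i,t}=x_t+w_{i,t}$. $P_\epsilon$ corresponds to adding the edge $\{i,j\}$ with weight $\epsilon$ and subtracting $\epsilon$ from the self-reliances $p_{ii},p_{jj}$. $\mathbf e_i$ is the $i$-th standard basis vector; $[P^2]_{ij}$ is the $(i,j)$ entry of $P^2$. *)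

theory Defs
  imports "Jordan_Normal_Form.Spectral_Radius" "HOL-Library.Landau_Symbols"
begin

text \<open>For a real symmetric matrix these
  are exactly its N real eigenvalues counted with multiplicity.\<close>
definition eigs :: "real mat \<Rightarrow> real multiset" where
  "eigs M = proots (char_poly M)"

definition msd_tilde ::
  "nat \<Rightarrow> real \<Rightarrow> real \<Rightarrow> real \<Rightarrow> real mat \<Rightarrow> real \<Rightarrow> real" where
  "msd_tilde N a sr sw M \<alpha> =
     sr\<^sup>2 / (1 - a\<^sup>2 * (1 - \<alpha>)\<^sup>2)
     + 1 / real N * sum_mset (image_mset
         (\<lambda>l. a\<^sup>2 * \<alpha>\<^sup>2 * sw\<^sup>2 * l\<^sup>2 / (1 - a\<^sup>2 * (l - \<alpha>)\<^sup>2)) (eigs M))"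

definition deltaP :: "nat \<Rightarrow> nat \<Rightarrow> nat \<Rightarrow> real mat" where
  "deltaP N i j = mat N N (\<lambda>(r, c).
      - ((if r = i then 1 else 0) - (if r = j then 1 else 0))
        * ((if c = i then 1 else 0) - (if c = j then 1 else 0)))"

definition zk :: "nat \<Rightarrow> real \<Rightarrow> real vec \<Rightarrow> nat \<Rightarrow> nat \<Rightarrow> real" where
  "zk N \<epsilon> vk i j = \<epsilon> * (vk \<bullet> (deltaP N i j *\<^sub>v vk))"

definition hk ::
  "nat \<Rightarrow> real \<Rightarrow> real \<Rightarrow> real \<Rightarrow> real \<Rightarrow> real vec \<Rightarrow> nat \<Rightarrow> nat \<Rightarrow> real" where
  "hk N a \<alpha> \<epsilon> lk vk i j =
     zk N \<epsilon> vk i j * (2 * (1 - \<alpha>\<^sup>2 * a\<^sup>2) * lk + 2 * a\<^sup>2 * \<alpha> * lk\<^sup>2)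
     / (1 - a\<^sup>2 * (lk - \<alpha>)\<^sup>2)\<^sup>2"

end

theory Submission
  imports Defs
begin

text \<open>
  The MSD summand \<open>\<lambda>\<^sup>2 / (1 - a\<^sup>2 (\<lambda> - \<alpha>)\<^sup>2)\<close> splits into partial fractions with poles
  \<open>\<beta>\<^sub>\<pm> = \<alpha> \<pm> 1/a\<close>, so its sum over the spectrum of a symmetric matrix \<open>M\<close> is an affine
  combination of the resolvent traces \<open>tr (\<beta>\<^sub>\<pm> I - M)\<inverse>\<close>, which are logarithmic derivatives of
  the characteristic polynomial at \<open>\<beta>\<^sub>\<pm>\<close>.  Adding the edge \<open>{i, j}\<close> is the rank-one update
  \<open>\<beta> I - P\<^sub>\<epsilon> = (\<beta> I - P) + \<epsilon> u u\<^sup>T\<close> with \<open>u = e\<^sub>i - e\<^sub>j\<close>, so by Sherman--Morrison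
  \<open>tr (\<beta> I - P\<^sub>\<epsilon>)\<inverse> = tr R - \<epsilon> u\<^sup>T R\<^sup>2 u / (1 + \<epsilon> u\<^sup>T R u)\<close> with \<open>R = (\<beta> I - P)\<inverse>\<close>.  The
  first-order terms of these rational functions of \<open>\<epsilon>\<close> are exactly the \<open>h\<^sub>k\<close>, and the remainder
  is \<open>\<epsilon>\<^sup>2\<close> times a function continuous at \<open>0\<close>.

  For (ii), each \<open>h\<^sub>k\<close> is \<open>-\<epsilon> (v\<^sub>k(i) - v\<^sub>k(j))\<^sup>2\<close> times a number that is nonnegative because
  \<open>P\<close> is positive semidefinite and whose denominator is at least \<open>(1 - a\<^sup>2 \<zeta>\<^sub>m\<^sub>a\<^sub>x\<^sup>2)\<^sup>2\<close>, except
  for the constant eigenvector, whose term vanishes.  The spectral decompositions of \<open>P\<close> and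
  \<open>P\<^sup>2\<close> turn the resulting weighted sums of \<open>(v\<^sub>k(i) - v\<^sub>k(j))\<^sup>2\<close> into matrix entries.
\<close>

lemma index_mult_mat_sum:
  assumes "A \<in> carrier_mat n n" "B \<in> carrier_mat n n" "r < n" "c < n"
  shows "(A * B) $$ (r, c) = (\<Sum>s<n. A $$ (r, s) * B $$ (s, c))"
  using assms by (simp add: scalar_prod_def lessThan_atLeast0)

lemma index_mult_mat_vec_sum:
  assumes "A \<in> carrier_mat n n" "x \<in> carrier_vec n" "r < n"
  shows "(A *\<^sub>v x) $ r = (\<Sum>s<n. A $$ (r, s) * x $ s)"
  using assms by (simp add: scalar_prod_def lessThan_atLeast0)

section \<open>Characteristic polynomials and resolvent traces\<close>

lemma poly_pderiv_prod_linear: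
  fixes L :: "real list"
  assumes "poly (\<Prod>r\<leftarrow>L. [:-r, 1:]) \<beta> \<noteq> 0"
  shows "poly (pderiv (\<Prod>r\<leftarrow>L. [:-r, 1:])) \<beta> = poly (\<Prod>r\<leftarrow>L. [:-r, 1:]) \<beta> * (\<Sum>r\<leftarrow>L. 1 / (\<beta> - r))"
  using assms
proof (induction L)
  case (Cons r L)
  let ?q = "\<Prod>r\<leftarrow>L. [:-r, 1:]"
  have r: "\<beta> - r \<noteq> 0" and q: "poly ?q \<beta> \<noteq> 0" using Cons.prems by auto
  have "poly (pderiv (\<Prod>r\<leftarrow>r # L. [:-r, 1:])) \<beta> = poly ?q \<beta> + (\<beta> - r) * poly (pderiv ?q) \<beta>"
    by (subst list.map(2), subst prod_list.Cons, subst pderiv_mult) (simp add: pderiv_pCons algebra_simps)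
  also have "\<dots> = (\<beta> - r) * poly ?q \<beta> * (1 / (\<beta> - r) + (\<Sum>r\<leftarrow>L. 1 / (\<beta> - r)))"
    using r Cons.IH[OF q] by (simp add: field_simps)
  finally show ?case by (simp add: algebra_simps)
qed simp

lemma proots_prod_linear: "proots (\<Prod>r\<leftarrow>L. [:-r, 1:]) = mset (L :: real list)"
proof (induction L)
  case (Cons a L)
  have "(\<Prod>r\<leftarrow>L. [:-r, 1:]) \<noteq> (0 :: real poly)" by (auto simp: prod_list_zero_iff)
  then have "proots ([:-a, 1:] * (\<Prod>r\<leftarrow>L. [:-r, 1:])) = proots [:-a, 1:] + proots (\<Prod>r\<leftarrow>L. [:-r, 1:])"
    by (intro proots_mult) simp_all
  then show ?case using Cons by simp
qed simp

lemma char_poly_root_real_if_symmetric: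
  fixes M :: "real mat"
  assumes M: "M \<in> carrier_mat n n" and sym: "M\<^sup>T = M"
    and root: "poly (char_poly (map_mat complex_of_real M)) z = 0"
  shows "Im z = 0"
proof -
  let ?M = "map_mat complex_of_real M"
  have "eigenvalue ?M z" using eigenvalue_root_char_poly[of ?M n] M root by auto
  then obtain x where x: "x \<in> carrier_vec n" "x \<noteq> 0\<^sub>v n" "?M *\<^sub>v x = z \<cdot>\<^sub>v x"
    unfolding eigenvalue_def eigenvector_def using M by auto
  have symM: "M $$ (i, j) = M $$ (j, i)" if "i < n" "j < n" for i j
    using sym M that by (metis carrier_matD index_transpose_mat(1))
  define s where "s = (\<Sum>i<n. cnj (x$i) * (\<Sum>j<n. of_real (M $$ (i, j)) * x$j))"
  define r where "r = (\<Sum>i<n. (Re (x$i))\<^sup>2 + (Im (x$i))\<^sup>2)"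
  \<comment> \<open>the Hermitian form \<open>s = x\<^sup>* M x\<close> is real and equals \<open>z \<parallel>x\<parallel>\<^sup>2\<close>\<close>
  have Mx: "(?M *\<^sub>v x) $ i = (\<Sum>j<n. of_real (M $$ (i, j)) * x$j)" if "i < n" for i
    using that M x(1) by (auto simp: mult_mat_vec_def scalar_prod_def lessThan_atLeast0 intro!: sum.cong)
  have "s = (\<Sum>i<n. cnj (x$i) * (z * x$i))"
    unfolding s_def using Mx x(1,3) by (intro sum.cong refl) (metis index_smult_vec(1) carrier_vecD lessThan_iff)
  also have "\<dots> = z * of_real r"
    unfolding r_def by (simp add: sum_distrib_left complex_mult_cnj algebra_simps)
  finally have s_eq: "s = z * of_real r" .
  have "cnj s = (\<Sum>i<n. \<Sum>j<n. x$i * of_real (M $$ (i, j)) * cnj (x$j))"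
    unfolding s_def by (simp add: sum_distrib_left algebra_simps)
  also have "\<dots> = (\<Sum>j<n. \<Sum>i<n. cnj (x$j) * (of_real (M $$ (j, i)) * x$i))"
    by (subst sum.swap) (intro sum.cong refl, simp add: symM mult.commute mult.left_commute)
  also have "\<dots> = s" unfolding s_def by (simp add: sum_distrib_left)
  finally have "Im s = 0" by (metis Reals_cnj_iff complex_is_Real_iff)
  moreover have "r > 0"
  proof -
    obtain i where i: "i < n" "x$i \<noteq> 0" using x(1,2)
      by (metis carrier_vecD eq_vecI index_zero_vec(1) index_zero_vec(2))
    have "(Re (x$i))\<^sup>2 + (Im (x$i))\<^sup>2 > 0" using i(2)
      by (metis add_nonneg_nonneg complex_eq_0 zero_le_power2 order_le_less)
    also have "\<dots> \<le> r" unfolding r_def by (rule member_le_sum) (use i in auto)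
    finally show ?thesis .
  qed
  ultimately show ?thesis using s_eq by simp
qed

lemma char_poly_symmetric_splits:
  fixes M :: "real mat"
  assumes M: "M \<in> carrier_mat n n" and sym: "M\<^sup>T = M"
  obtains L where "char_poly M = (\<Prod>r\<leftarrow>L. [:-r, 1:])" and "length L = n"
proof -
  interpret h: map_poly_inj_idom_hom "of_real :: real \<Rightarrow> complex" ..
  let ?M = "map_mat complex_of_real M"
  obtain zs where zs: "char_poly ?M = (\<Prod>z\<leftarrow>zs. [:-z, 1:])" "length zs = n"
    using char_poly_factorized[of ?M n] M by auto
  have real: "z = of_real (Re z)" if "z \<in> set zs" for z
  proof -
    have "poly (char_poly ?M) z = 0" unfolding zs(1) using that
      by (simp add: poly_prod_list prod_list_zero_iff)
    then show ?thesis using char_poly_root_real_if_symmetric[OF M sym] complex_eq_iff by auto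
  qed
  have "map_poly complex_of_real (char_poly M) = char_poly ?M"
    by (metis of_real_hom.char_poly_hom[OF M])
  also have "\<dots> = (\<Prod>r\<leftarrow>map Re zs. [:-of_real r, 1:])"
    unfolding zs(1) using real by (induction zs) auto
  also have "\<dots> = map_poly complex_of_real (\<Prod>r\<leftarrow>map Re zs. [:-r, 1:])"
    by (simp add: h.hom_prod_list o_def)
  finally have "char_poly M = (\<Prod>r\<leftarrow>map Re zs. [:-r, 1:])" by (rule h.injectivity)
  with zs(2) show ?thesis using that[of "map Re zs"] by simp
qed

lemma pderiv_char_poly_eq_trace_inverse:
  fixes M X :: "real mat"
  assumes M: "M \<in> carrier_mat n n" and X: "X \<in> carrier_mat n n"
    and inverse: "(\<beta> \<cdot>\<^sub>m 1\<^sub>m n - M) * X = 1\<^sub>m n"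
  shows "poly (char_poly M) \<beta> \<noteq> 0"
    and "poly (pderiv (char_poly M)) \<beta> = poly (char_poly M) \<beta> * (\<Sum>i<n. X $$ (i, i))"
proof -
  define B where "B = \<beta> \<cdot>\<^sub>m 1\<^sub>m n - M"
  have B: "B \<in> carrier_mat n n" unfolding B_def using M by auto
  have char_poly_B: "poly (char_poly M) \<beta> = det B"
  proof -
    have "- char_matrix M \<beta> = B" unfolding B_def char_matrix_def by (rule eq_matI) (use M in auto)
    then show ?thesis using char_poly_matrix[OF M] by simp
  qed
  have "det B * det X = 1" using det_mult[OF B X] inverse unfolding B_def by simp
  then show "poly (char_poly M) \<beta> \<noteq> 0" using char_poly_B by auto
  have minor: "poly (char_poly (mat_delete M i i)) \<beta> = cofactor B i i" if "i < n" for i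
  proof -
    have "- char_matrix (mat_delete M i i) \<beta> = mat_delete B i i"
      unfolding B_def char_matrix_def mat_delete_def by (rule eq_matI) (use M that in auto)
    then show ?thesis
      using char_poly_matrix[OF mat_delete_carrier[OF M]]
      by (simp add: cofactor_def power_add[symmetric] mult_2[symmetric])
  qed
  have adj: "adj_mat B = det B \<cdot>\<^sub>m X"
  proof -
    have A: "adj_mat B \<in> carrier_mat n n" "adj_mat B * B = det B \<cdot>\<^sub>m 1\<^sub>m n" using adj_mat[OF B] by auto
    have "adj_mat B = adj_mat B * (B * X)" using inverse A(1) unfolding B_def by simp
    also have "\<dots> = (adj_mat B * B) * X" using A(1) B X by (simp add: assoc_mult_mat)
    finally show ?thesis using A(2) X by (simp add: mult_smult_assoc_mat[of _ n n _ n])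
  qed
  have "poly (pderiv (char_poly M)) \<beta> = (\<Sum>i<n. cofactor B i i)"
    unfolding pderiv_char_poly[OF M] by (simp add: poly_sum minor)
  also have "\<dots> = (\<Sum>i<n. det B * X $$ (i, i))"
    by (intro sum.cong refl) (metis adj B X adj_mat_def carrier_matD index_mat(1) index_smult_mat(1)
        lessThan_iff split_conv)
  finally show "poly (pderiv (char_poly M)) \<beta> = poly (char_poly M) \<beta> * (\<Sum>i<n. X $$ (i, i))"
    unfolding char_poly_B by (simp add: sum_distrib_left)
qed

lemma sum_inverse_root_gaps_eq_trace_inverse:
  fixes M X :: "real mat"
  assumes M: "M \<in> carrier_mat n n" and X: "X \<in> carrier_mat n n"
    and inverse: "(\<beta> \<cdot>\<^sub>m 1\<^sub>m n - M) * X = 1\<^sub>m n"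
    and split: "char_poly M = (\<Prod>r\<leftarrow>L. [:-r, 1:])"
  shows "\<beta> \<notin> set L" and "(\<Sum>r\<leftarrow>L. 1 / (\<beta> - r)) = (\<Sum>i<n. X $$ (i, i))"
proof -
  note trace = pderiv_char_poly_eq_trace_inverse[OF M X inverse]
  have nz: "poly (\<Prod>r\<leftarrow>L. [:-r, 1:]) \<beta> \<noteq> 0" using trace(1) split by simp
  then show "\<beta> \<notin> set L" by (auto simp: poly_prod_list prod_list_zero_iff)
  from poly_pderiv_prod_linear[OF nz] trace(2) split nz
  show "(\<Sum>r\<leftarrow>L. 1 / (\<beta> - r)) = (\<Sum>i<n. X $$ (i, i))" by simp
qed

lemma eigenvalue_bound_by_spectral_radius:
  fixes P :: "real mat" and x :: "real vec"
  assumes P: "P \<in> carrier_mat N N" and x: "x \<in> carrier_vec N" "x \<noteq> 0\<^sub>v N"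
    and eigvec: "P *\<^sub>v x = l \<cdot>\<^sub>v x"
    and rho: "spectral_radius (map_mat complex_of_real (a \<cdot>\<^sub>m (P - \<alpha> \<cdot>\<^sub>m 1\<^sub>m N))) < 1"
  shows "\<bar>a * (l - \<alpha>)\<bar> < 1"
proof -
  define A where "A = a \<cdot>\<^sub>m (P - \<alpha> \<cdot>\<^sub>m 1\<^sub>m N)"
  let ?A = "map_mat complex_of_real A" and ?x = "map_vec complex_of_real x"
  have A: "A \<in> carrier_mat N N" unfolding A_def using P by auto
  have "A *\<^sub>v x = a * (l - \<alpha>) \<cdot>\<^sub>v x"
  proof (rule eq_vecI)
    fix r assume "r < dim_vec (a * (l - \<alpha>) \<cdot>\<^sub>v x)"
    then have r: "r < N" using x by simp
    have "(A *\<^sub>v x) $ r = (\<Sum>s<N. a * (P $$ (r, s) * x $ s) - (if s = r then a * \<alpha> * x $ s else 0))"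
      unfolding index_mult_mat_vec_sum[OF A x(1) r] using r P by (intro sum.cong refl) (auto simp: A_def algebra_simps)
    also have "\<dots> = a * (P *\<^sub>v x) $ r - a * \<alpha> * x $ r"
      using r by (simp add: index_mult_mat_vec_sum[OF P x(1) r] sum_subtractf sum_distrib_left)
    finally show "(A *\<^sub>v x) $ r = (a * (l - \<alpha>) \<cdot>\<^sub>v x) $ r"
      using r x eigvec by (simp add: algebra_simps)
  qed (use A x in auto)
  then have "?A *\<^sub>v ?x = of_real (a * (l - \<alpha>)) \<cdot>\<^sub>v ?x"
    using of_real_hom.mult_mat_vec_hom[OF A x(1)] of_real_hom.vec_hom_smult by metis
  then have "eigenvector ?A ?x (of_real (a * (l - \<alpha>)))"
    unfolding eigenvector_def using x A of_real_hom.vec_hom_zero_iff by auto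
  then have "of_real (a * (l - \<alpha>)) \<in> spectrum ?A" unfolding spectrum_def eigenvalue_def by auto
  moreover have "N > 0"
    using x by (metis carrier_vecD dim_vec eq_vecI gr0I index_zero_vec(2) less_zeroE)
  ultimately have "cmod (of_real (a * (l - \<alpha>))) \<le> spectral_radius ?A"
    using spectral_radius_mem_max(2)[of ?A N] A by auto
  then show ?thesis using rho unfolding A_def norm_of_real by linarith
qed

section \<open>Adding an edge as a rank-one update\<close>

lemma sherman_morrison_entry:
  fixes B X :: "nat \<Rightarrow> nat \<Rightarrow> real" and u :: "nat \<Rightarrow> real"
  assumes inverse: "\<And>r c. r < n \<Longrightarrow> c < n \<Longrightarrow> (\<Sum>s<n. B r s * X s c) = (if r = c then 1 else 0)"
    and sym: "\<And>r c. r < n \<Longrightarrow> c < n \<Longrightarrow> X r c = X c r"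
    and y: "y = (\<lambda>s. \<Sum>t<n. X s t * u t)"
    and nz: "1 + \<epsilon> * (\<Sum>s<n. u s * y s) \<noteq> 0"
    and rc: "r < n" "c < n"
  shows "(\<Sum>s<n. (B r s + \<epsilon> * u r * u s) * (X s c - \<epsilon> / (1 + \<epsilon> * (\<Sum>t<n. u t * y t)) * y s * y c))
     = (if r = c then 1 else 0)"
proof -
  define \<kappa> where "\<kappa> = \<epsilon> / (1 + \<epsilon> * (\<Sum>t<n. u t * y t))"
  have Bu: "(\<Sum>s<n. B r s * y s) = u r"
  proof -
    have "(\<Sum>s<n. B r s * y s) = (\<Sum>s<n. \<Sum>t<n. B r s * X s t * u t)"
      unfolding y by (simp add: sum_distrib_left mult.assoc)
    also have "\<dots> = (\<Sum>t<n. (\<Sum>s<n. B r s * X s t) * u t)"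
      by (subst sum.swap) (simp add: sum_distrib_right)
    also have "\<dots> = (\<Sum>t<n. (if r = t then u t else 0))"
      using inverse[OF rc(1)] by (intro sum.cong refl) simp
    finally show ?thesis using rc(1) by simp
  qed
  have uX: "(\<Sum>s<n. u s * X s c) = y c"
    unfolding y using sym rc(2) by (auto simp: mult.commute intro!: sum.cong)
  have "(\<Sum>s<n. (B r s + \<epsilon> * u r * u s) * (X s c - \<kappa> * y s * y c))
     = (\<Sum>s<n. B r s * X s c) - (\<kappa> * y c) * (\<Sum>s<n. B r s * y s)
        + (\<epsilon> * u r) * (\<Sum>s<n. u s * X s c) - (\<epsilon> * \<kappa> * u r * y c) * (\<Sum>s<n. u s * y s)"
    by (simp add: algebra_simps sum.distrib sum_subtractf sum_distrib_left)
  also have "\<dots> = (if r = c then 1 else 0) + u r * y c * (\<epsilon> - \<kappa> * (1 + \<epsilon> * (\<Sum>s<n. u s * y s)))"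
    unfolding Bu uX inverse[OF rc] by (simp add: algebra_simps)
  also have "\<kappa> * (1 + \<epsilon> * (\<Sum>s<n. u s * y s)) = \<epsilon>" unfolding \<kappa>_def using nz by simp
  finally show ?thesis unfolding \<kappa>_def by simp
qed

definition unit_diff :: "nat \<Rightarrow> nat \<Rightarrow> nat \<Rightarrow> real" where
  "unit_diff i j s = (if s = i then 1 else 0) - (if s = j then 1 else 0)"

lemma sum_unit_diff_mult:
  assumes "i < n" "j < n" "i \<noteq> j"
  shows "(\<Sum>s<n. unit_diff i j s * f s) = f i - f j"
proof -
  have "(\<Sum>s<n. unit_diff i j s * f s) = (\<Sum>s<n. if s = i then f s else 0) - (\<Sum>s<n. if s = j then f s else 0)"
    unfolding unit_diff_def sum_subtractf[symmetric] by (intro sum.cong refl) auto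
  then show ?thesis using assms by simp
qed

lemma deltaP_carrier: "deltaP N i j \<in> carrier_mat N N"
  unfolding deltaP_def by simp

lemma index_deltaP: "r < N \<Longrightarrow> s < N \<Longrightarrow> deltaP N i j $$ (r, s) = - (unit_diff i j r * unit_diff i j s)"
  unfolding deltaP_def unit_diff_def by simp

lemma quadratic_form_deltaP:
  assumes x: "x \<in> carrier_vec N" and ij: "i < N" "j < N" "i \<noteq> j"
  shows "x \<bullet> (deltaP N i j *\<^sub>v x) = - (x $ i - x $ j)\<^sup>2"
proof -
  have row: "(deltaP N i j *\<^sub>v x) $ r = - (unit_diff i j r * (x $ i - x $ j))" if "r < N" for r
  proof -
    have "(deltaP N i j *\<^sub>v x) $ r = (\<Sum>s<N. (- unit_diff i j r) * (unit_diff i j s * x $ s))"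
      using that by (simp add: index_mult_mat_vec_sum[OF deltaP_carrier x] index_deltaP mult.assoc)
    also have "\<dots> = - (unit_diff i j r * (x $ i - x $ j))"
      using ij by (simp add: sum_negf sum_distrib_left[symmetric] sum_unit_diff_mult)
    finally show ?thesis .
  qed
  have "x \<bullet> (deltaP N i j *\<^sub>v x) = (\<Sum>r<N. x $ r * (deltaP N i j *\<^sub>v x) $ r)"
    using x deltaP_carrier[of N i j] by (simp add: scalar_prod_def lessThan_atLeast0)
  also have "\<dots> = (\<Sum>r<N. (- (x $ i - x $ j)) * (unit_diff i j r * x $ r))"
    by (intro sum.cong refl) (simp add: row algebra_simps)
  also have "\<dots> = - (x $ i - x $ j)\<^sup>2"
    by (simp only: sum_distrib_left[symmetric] sum_unit_diff_mult[OF ij]) (simp add: power2_eq_square right_diff_distrib left_diff_distrib)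
  finally show ?thesis .
qed

section \<open>Orthonormal eigenbases and resolvents\<close>

locale orthonormal_eigenbasis =
  fixes N :: nat and P :: "real mat" and lam :: "nat \<Rightarrow> real" and v :: "nat \<Rightarrow> real vec"
  assumes carrier: "P \<in> carrier_mat N N"
    and eigvec_carrier: "\<And>k. k < N \<Longrightarrow> v k \<in> carrier_vec N"
    and eigvec: "\<And>k. k < N \<Longrightarrow> P *\<^sub>v v k = lam k \<cdot>\<^sub>v v k"
    and orthonormal: "\<And>k l. k < N \<Longrightarrow> l < N \<Longrightarrow> v k \<bullet> v l = (if k = l then 1 else 0)"
begin

lemma sum_eigvec_mult: "k < N \<Longrightarrow> l < N \<Longrightarrow> (\<Sum>r<N. v k $ r * v l $ r) = (if k = l then 1 else 0)"
  using orthonormal[of k l] eigvec_carrier[of l] by (simp add: scalar_prod_def lessThan_atLeast0)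

lemma eigvec_row_sum: "k < N \<Longrightarrow> r < N \<Longrightarrow> (\<Sum>t<N. P $$ (r, t) * v k $ t) = lam k * v k $ r"
  using eigvec[of k] index_mult_mat_vec_sum[OF carrier eigvec_carrier] eigvec_carrier[of k]
  by (metis carrier_vecD index_smult_vec(1))

lemma eigvec_nonzero: "k < N \<Longrightarrow> v k \<noteq> 0\<^sub>v N"
  using orthonormal[of k k] by auto

lemma eigenvalue_eq_quadratic_form: "k < N \<Longrightarrow> lam k = v k \<bullet> (P *\<^sub>v v k)"
  using orthonormal[of k k] eigvec[of k] eigvec_carrier[of k] by simp

text \<open>Completeness: the square matrix with orthonormal columns \<open>v k\<close> is orthogonal, so its rows
  are orthonormal too.\<close>
lemma sum_eigvec_index_mult: "r < N \<Longrightarrow> s < N \<Longrightarrow> (\<Sum>k<N. v k $ r * v k $ s) = (if r = s then 1 else 0)"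
proof -
  assume r: "r < N" and s: "s < N"
  define V where "V = mat N N (\<lambda>(r, k). v k $ r)"
  have V: "V \<in> carrier_mat N N" "V\<^sup>T \<in> carrier_mat N N" unfolding V_def by auto
  have "V\<^sup>T * V = 1\<^sub>m N"
  proof (rule eq_matI)
    fix k l assume "k < dim_row (1\<^sub>m N)" "l < dim_col (1\<^sub>m N)"
    then have k: "k < N" and l: "l < N" by auto
    show "(V\<^sup>T * V) $$ (k, l) = 1\<^sub>m N $$ (k, l)"
      using index_mult_mat_sum[OF V(2) V(1) k l] k l sum_eigvec_mult[OF k l] by (simp add: V_def)
  qed (use V in auto)
  then have "V * V\<^sup>T = 1\<^sub>m N" using mat_mult_left_right_inverse[OF V(2) V(1)] by simp
  then show ?thesis using index_mult_mat_sum[OF V(1) V(2) r s] r s by (simp add: V_def)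
qed

lemma spectral_decomposition:
  "r < N \<Longrightarrow> s < N \<Longrightarrow> P $$ (r, s) = (\<Sum>k<N. lam k * v k $ r * v k $ s)"
proof -
  assume r: "r < N" and s: "s < N"
  have "P $$ (r, s) = (\<Sum>t<N. P $$ (r, t) * (\<Sum>k<N. v k $ t * v k $ s))"
    using s by (simp add: sum_eigvec_index_mult if_distrib sum.delta cong: if_cong)
  also have "\<dots> = (\<Sum>k<N. (\<Sum>t<N. P $$ (r, t) * v k $ t) * v k $ s)"
    by (simp add: sum_distrib_left sum_distrib_right mult.assoc) (rule sum.swap)
  also have "\<dots> = (\<Sum>k<N. lam k * v k $ r * v k $ s)"
    using r by (simp add: eigvec_row_sum)
  finally show ?thesis .
qed

lemma spectral_decomposition_square:
  "r < N \<Longrightarrow> s < N \<Longrightarrow> (P * P) $$ (r, s) = (\<Sum>k<N. (lam k)\<^sup>2 * v k $ r * v k $ s)"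
proof -
  assume r: "r < N" and s: "s < N"
  have "(P * P) $$ (r, s) = (\<Sum>t<N. P $$ (r, t) * (\<Sum>k<N. lam k * v k $ t * v k $ s))"
    using s by (simp add: index_mult_mat_sum[OF carrier carrier r s] spectral_decomposition)
  also have "\<dots> = (\<Sum>k<N. lam k * (\<Sum>t<N. P $$ (r, t) * v k $ t) * v k $ s)"
    by (simp add: sum_distrib_left sum_distrib_right mult_ac) (rule sum.swap)
  also have "\<dots> = (\<Sum>k<N. (lam k)\<^sup>2 * v k $ r * v k $ s)"
    using r by (simp add: eigvec_row_sum power2_eq_square mult.assoc)
  finally show ?thesis .
qed

lemma transpose_eq_self: "P\<^sup>T = P"
  by (rule eq_matI) (use carrier in \<open>auto simp: spectral_decomposition mult_ac\<close>)

lemma sum_sq_eigvec_diff: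
  assumes "\<And>r s. r \<in> {i, j} \<Longrightarrow> s \<in> {i, j} \<Longrightarrow> Q r s = (\<Sum>k<N. \<mu> k * v k $ r * v k $ s)"
  shows "(\<Sum>k<N. (v k $ i - v k $ j)\<^sup>2 * \<mu> k) = Q i i + Q j j - 2 * Q i j"
proof -
  have "(\<Sum>k<N. (v k $ i - v k $ j)\<^sup>2 * \<mu> k)
      = (\<Sum>k<N. \<mu> k * v k $ i * v k $ i + \<mu> k * v k $ j * v k $ j - 2 * (\<mu> k * v k $ i * v k $ j))"
    by (intro sum.cong refl) (simp add: power2_eq_square algebra_simps)
  then show ?thesis using assms by (simp add: sum.distrib sum_subtractf sum_distrib_left)
qed

lemma parseval:
  "(\<Sum>r<N. (\<Sum>k<N. f k * v k $ r) * (\<Sum>l<N. g l * v l $ r)) = (\<Sum>k<N. f k * g k)"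
proof -
  have "(\<Sum>r<N. (\<Sum>k<N. f k * v k $ r) * (\<Sum>l<N. g l * v l $ r))
      = (\<Sum>k<N. \<Sum>l<N. f k * g l * (\<Sum>r<N. v k $ r * v l $ r))"
  proof -
    have "(\<Sum>r<N. (\<Sum>k<N. f k * v k $ r) * (\<Sum>l<N. g l * v l $ r))
        = (\<Sum>r<N. \<Sum>k<N. \<Sum>l<N. f k * g l * (v k $ r * v l $ r))"
      by (simp add: sum_product mult_ac)
    also have "\<dots> = (\<Sum>k<N. \<Sum>r<N. \<Sum>l<N. f k * g l * (v k $ r * v l $ r))"
      by (rule sum.swap)
    also have "\<dots> = (\<Sum>k<N. \<Sum>l<N. \<Sum>r<N. f k * g l * (v k $ r * v l $ r))"
      by (rule sum.cong[OF refl], rule sum.swap)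
    finally show ?thesis by (simp add: sum_distrib_left)
  qed
  also have "\<dots> = (\<Sum>k<N. f k * g k)"
    by (simp add: sum_eigvec_mult if_distrib sum.delta cong: if_cong)
  finally show ?thesis .
qed

definition resolvent :: "real \<Rightarrow> real mat" where
  "resolvent \<beta> = mat N N (\<lambda>(r, c). \<Sum>k<N. v k $ r * v k $ c / (\<beta> - lam k))"

text \<open>With \<open>u = e\<^sub>i - e\<^sub>j\<close>, these are \<open>u\<^sup>T (\<beta> I - P)\<inverse> u\<close> and \<open>u\<^sup>T (\<beta> I - P)\<^sup>-\<^sup>2 u\<close>.\<close>
definition resolvent_form :: "real \<Rightarrow> nat \<Rightarrow> nat \<Rightarrow> real" where
  "resolvent_form \<beta> i j = (\<Sum>k<N. (v k $ i - v k $ j)\<^sup>2 / (\<beta> - lam k))"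

definition resolvent_sq_form :: "real \<Rightarrow> nat \<Rightarrow> nat \<Rightarrow> real" where
  "resolvent_sq_form \<beta> i j = (\<Sum>k<N. ((v k $ i - v k $ j) / (\<beta> - lam k))\<^sup>2)"

definition resolvent_unit_diff :: "real \<Rightarrow> nat \<Rightarrow> nat \<Rightarrow> nat \<Rightarrow> real" where
  "resolvent_unit_diff \<beta> i j s = resolvent \<beta> $$ (s, i) - resolvent \<beta> $$ (s, j)"

lemma resolvent_carrier: "resolvent \<beta> \<in> carrier_mat N N"
  unfolding resolvent_def by simp

lemma resolvent_symmetric: "r < N \<Longrightarrow> c < N \<Longrightarrow> resolvent \<beta> $$ (r, c) = resolvent \<beta> $$ (c, r)"
  unfolding resolvent_def by (simp add: mult.commute)

lemma resolvent_inverse: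
  assumes no_eigenvalue: "\<And>k. k < N \<Longrightarrow> \<beta> \<noteq> lam k"
  shows "(\<beta> \<cdot>\<^sub>m 1\<^sub>m N - P) * resolvent \<beta> = 1\<^sub>m N"
proof (rule eq_matI)
  fix r c assume "r < dim_row (1\<^sub>m N)" "c < dim_col (1\<^sub>m N)"
  then have r: "r < N" and c: "c < N" by auto
  let ?R = "\<lambda>s c. resolvent \<beta> $$ (s, c)"
  have B: "\<beta> \<cdot>\<^sub>m 1\<^sub>m N - P \<in> carrier_mat N N" using carrier by auto
  have "((\<beta> \<cdot>\<^sub>m 1\<^sub>m N - P) * resolvent \<beta>) $$ (r, c)
      = (\<Sum>s<N. (if r = s then \<beta> * ?R s c else 0) - P $$ (r, s) * ?R s c)"
    unfolding index_mult_mat_sum[OF B resolvent_carrier r c]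
    using r carrier by (intro sum.cong refl) (auto simp: algebra_simps)
  also have "\<dots> = \<beta> * ?R r c - (\<Sum>s<N. P $$ (r, s) * ?R s c)"
    using r by (simp add: sum_subtractf)
  also have "(\<Sum>s<N. P $$ (r, s) * ?R s c) = (\<Sum>k<N. lam k * v k $ r * v k $ c / (\<beta> - lam k))"
  proof -
    have "(\<Sum>s<N. P $$ (r, s) * ?R s c) = (\<Sum>s<N. \<Sum>k<N. P $$ (r, s) * v k $ s * (v k $ c / (\<beta> - lam k)))"
      using c by (intro sum.cong refl) (simp add: resolvent_def sum_distrib_left mult.assoc)
    also have "\<dots> = (\<Sum>k<N. (\<Sum>s<N. P $$ (r, s) * v k $ s) * (v k $ c / (\<beta> - lam k)))"
      by (subst sum.swap) (simp only: sum_distrib_right)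
    finally show ?thesis using r by (simp add: eigvec_row_sum)
  qed
  also have "\<beta> * ?R r c - (\<Sum>k<N. lam k * v k $ r * v k $ c / (\<beta> - lam k))
      = (\<Sum>k<N. \<beta> * (v k $ r * v k $ c / (\<beta> - lam k)) - lam k * v k $ r * v k $ c / (\<beta> - lam k))"
    using r c by (simp add: resolvent_def sum_distrib_left sum_subtractf)
  also have "\<dots> = (\<Sum>k<N. v k $ r * v k $ c)"
  proof (rule sum.cong[OF refl])
    fix k assume "k \<in> {..<N}"
    then have "\<beta> - lam k \<noteq> 0" using no_eigenvalue by auto
    have "\<beta> * (v k $ r * v k $ c / (\<beta> - lam k)) - lam k * v k $ r * v k $ c / (\<beta> - lam k)
        = (\<beta> - lam k) * (v k $ r * v k $ c) / (\<beta> - lam k)"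
      by (simp add: left_diff_distrib diff_divide_distrib mult.assoc)
    then show "\<beta> * (v k $ r * v k $ c / (\<beta> - lam k)) - lam k * v k $ r * v k $ c / (\<beta> - lam k)
        = v k $ r * v k $ c" using \<open>\<beta> - lam k \<noteq> 0\<close> by simp
  qed
  finally show "((\<beta> \<cdot>\<^sub>m 1\<^sub>m N - P) * resolvent \<beta>) $$ (r, c) = 1\<^sub>m N $$ (r, c)"
    using r c by (simp add: sum_eigvec_index_mult)
qed (use carrier in \<open>auto simp: resolvent_def\<close>)

lemma trace_resolvent: "(\<Sum>r<N. resolvent \<beta> $$ (r, r)) = (\<Sum>k<N. 1 / (\<beta> - lam k))"
proof -
  have "(\<Sum>r<N. resolvent \<beta> $$ (r, r)) = (\<Sum>k<N. (\<Sum>r<N. v k $ r * v k $ r) / (\<beta> - lam k))"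
    by (simp add: resolvent_def sum_divide_distrib) (rule sum.swap)
  then show ?thesis by (simp add: sum_eigvec_mult)
qed

lemma resolvent_unit_diff_expansion:
  assumes "s < N" "i < N" "j < N"
  shows "resolvent_unit_diff \<beta> i j s = (\<Sum>k<N. ((v k $ i - v k $ j) / (\<beta> - lam k)) * v k $ s)"
proof -
  have "resolvent_unit_diff \<beta> i j s
      = (\<Sum>k<N. v k $ s * v k $ i / (\<beta> - lam k) - v k $ s * v k $ j / (\<beta> - lam k))"
    using assms by (simp add: resolvent_unit_diff_def resolvent_def sum_subtractf)
  also have "\<dots> = (\<Sum>k<N. ((v k $ i - v k $ j) / (\<beta> - lam k)) * v k $ s)"
    by (rule sum.cong[OF refl]) (simp add: diff_divide_distrib algebra_simps)
  finally show ?thesis .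
qed

lemma rank_one_update_inverse:
  assumes no_eigenvalue: "\<And>k. k < N \<Longrightarrow> \<beta> \<noteq> lam k"
    and ij: "i < N" "j < N" "i \<noteq> j"
    and nz: "1 + \<epsilon> * resolvent_form \<beta> i j \<noteq> 0"
  shows "(\<beta> \<cdot>\<^sub>m 1\<^sub>m N - (P + \<epsilon> \<cdot>\<^sub>m deltaP N i j))
       * mat N N (\<lambda>(r, c). resolvent \<beta> $$ (r, c)
           - \<epsilon> / (1 + \<epsilon> * resolvent_form \<beta> i j) * resolvent_unit_diff \<beta> i j r * resolvent_unit_diff \<beta> i j c)
       = 1\<^sub>m N"
proof (rule eq_matI)
  fix r c assume "r < dim_row (1\<^sub>m N)" "c < dim_col (1\<^sub>m N)"
  then have r: "r < N" and c: "c < N" by auto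
  let ?B = "\<lambda>r s. (\<beta> \<cdot>\<^sub>m 1\<^sub>m N - P) $$ (r, s)" and ?R = "\<lambda>s c. resolvent \<beta> $$ (s, c)"
  let ?u = "unit_diff i j"
  have B: "\<beta> \<cdot>\<^sub>m 1\<^sub>m N - P \<in> carrier_mat N N" using carrier by auto
  have inverse: "(\<Sum>s<N. ?B r s * ?R s c) = (if r = c then 1 else 0)" if "r < N" "c < N" for r c
    using resolvent_inverse[OF no_eigenvalue] index_mult_mat_sum[OF B resolvent_carrier that] that
    by (metis index_one_mat(1))
  let ?y = "resolvent_unit_diff \<beta> i j"
  have y_eq: "?y = (\<lambda>s. \<Sum>t<N. ?R s t * ?u t)"
  proof
    fix s show "?y s = (\<Sum>t<N. ?R s t * ?u t)"
      using sum_unit_diff_mult[OF ij, of "\<lambda>t. ?R s t"] by (simp add: resolvent_unit_diff_def mult.commute)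
  qed
  have uy: "(\<Sum>s<N. ?u s * ?y s) = resolvent_form \<beta> i j"
  proof -
    have "(\<Sum>s<N. ?u s * ?y s) = ?y i - ?y j" by (rule sum_unit_diff_mult[OF ij])
    also have "\<dots> = (\<Sum>k<N. ((v k $ i - v k $ j) / (\<beta> - lam k)) * (v k $ i - v k $ j))"
      using ij by (simp add: resolvent_unit_diff_expansion sum_subtractf[symmetric] right_diff_distrib)
    finally show ?thesis by (simp add: resolvent_form_def power2_eq_square)
  qed
  have P\<epsilon>: "P + \<epsilon> \<cdot>\<^sub>m deltaP N i j \<in> carrier_mat N N" using carrier deltaP_carrier by auto
  have entry: "(\<beta> \<cdot>\<^sub>m 1\<^sub>m N - (P + \<epsilon> \<cdot>\<^sub>m deltaP N i j)) $$ (r, s) = ?B r s + \<epsilon> * ?u r * ?u s"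
    if "s < N" for s
    using r that carrier deltaP_carrier[of N i j] by (simp add: index_deltaP)
  have "((\<beta> \<cdot>\<^sub>m 1\<^sub>m N - (P + \<epsilon> \<cdot>\<^sub>m deltaP N i j))
       * mat N N (\<lambda>(r, c). ?R r c - \<epsilon> / (1 + \<epsilon> * resolvent_form \<beta> i j) * ?y r * ?y c)) $$ (r, c)
     = (\<Sum>s<N. (?B r s + \<epsilon> * ?u r * ?u s) * (?R s c - \<epsilon> / (1 + \<epsilon> * (\<Sum>t<N. ?u t * ?y t)) * ?y s * ?y c))"
    using c by (simp add: index_mult_mat_sum[OF minus_carrier_mat[OF P\<epsilon>] _ r c] entry uy)
  also have "\<dots> = (if r = c then 1 else 0)"
    by (rule sherman_morrison_entry[OF inverse resolvent_symmetric y_eq _ r c]) (use nz uy in simp_all)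
  finally show "((\<beta> \<cdot>\<^sub>m 1\<^sub>m N - (P + \<epsilon> \<cdot>\<^sub>m deltaP N i j))
       * mat N N (\<lambda>(r, c). ?R r c - \<epsilon> / (1 + \<epsilon> * resolvent_form \<beta> i j) * ?y r * ?y c)) $$ (r, c)
       = 1\<^sub>m N $$ (r, c)" using r c by simp
qed (use carrier deltaP_carrier in auto)

lemma sum_inverse_root_gaps_char_poly:
  assumes "\<And>k. k < N \<Longrightarrow> \<beta> \<noteq> lam k" and "char_poly P = (\<Prod>r\<leftarrow>L. [:-r, 1:])"
  shows "\<beta> \<notin> set L" and "(\<Sum>r\<leftarrow>L. 1 / (\<beta> - r)) = (\<Sum>k<N. 1 / (\<beta> - lam k))"
  using sum_inverse_root_gaps_eq_trace_inverse[OF carrier resolvent_carrier resolvent_inverse assms(2)]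
    trace_resolvent assms(1) by auto

lemma sum_inverse_root_gaps_char_poly_update:
  assumes no_eigenvalue: "\<And>k. k < N \<Longrightarrow> \<beta> \<noteq> lam k"
    and ij: "i < N" "j < N" "i \<noteq> j"
    and nz: "1 + \<epsilon> * resolvent_form \<beta> i j \<noteq> 0"
    and split: "char_poly (P + \<epsilon> \<cdot>\<^sub>m deltaP N i j) = (\<Prod>r\<leftarrow>L. [:-r, 1:])"
  shows "\<beta> \<notin> set L"
    and "(\<Sum>r\<leftarrow>L. 1 / (\<beta> - r))
       = (\<Sum>k<N. 1 / (\<beta> - lam k)) - \<epsilon> / (1 + \<epsilon> * resolvent_form \<beta> i j) * resolvent_sq_form \<beta> i j"
proof -
  define \<kappa> where "\<kappa> = \<epsilon> / (1 + \<epsilon> * resolvent_form \<beta> i j)"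
  define X where "X = mat N N (\<lambda>(r, c). resolvent \<beta> $$ (r, c)
      - \<kappa> * resolvent_unit_diff \<beta> i j r * resolvent_unit_diff \<beta> i j c)"
  have P\<epsilon>: "P + \<epsilon> \<cdot>\<^sub>m deltaP N i j \<in> carrier_mat N N" using carrier deltaP_carrier by auto
  have X: "X \<in> carrier_mat N N" unfolding X_def by simp
  have "(\<beta> \<cdot>\<^sub>m 1\<^sub>m N - (P + \<epsilon> \<cdot>\<^sub>m deltaP N i j)) * X = 1\<^sub>m N"
    unfolding X_def \<kappa>_def by (rule rank_one_update_inverse[OF no_eigenvalue ij nz])
  note gaps = sum_inverse_root_gaps_eq_trace_inverse[OF P\<epsilon> X this split]
  show "\<beta> \<notin> set L" by (rule gaps(1))
  have "(\<Sum>s<N. (resolvent_unit_diff \<beta> i j s)\<^sup>2)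
      = (\<Sum>s<N. (\<Sum>k<N. ((v k $ i - v k $ j) / (\<beta> - lam k)) * v k $ s)
                * (\<Sum>l<N. ((v l $ i - v l $ j) / (\<beta> - lam l)) * v l $ s))"
    unfolding power2_eq_square by (intro sum.cong refl) (use ij in \<open>simp only: lessThan_iff resolvent_unit_diff_expansion\<close>)
  also have "\<dots> = resolvent_sq_form \<beta> i j"
    unfolding parseval resolvent_sq_form_def power2_eq_square ..
  finally have "(\<Sum>s<N. (resolvent_unit_diff \<beta> i j s)\<^sup>2) = resolvent_sq_form \<beta> i j" .
  then have "(\<Sum>r<N. X $$ (r, r)) = (\<Sum>k<N. 1 / (\<beta> - lam k)) - \<kappa> * resolvent_sq_form \<beta> i j"
    by (simp add: X_def sum_subtractf sum_distrib_left[symmetric] trace_resolvent power2_eq_square mult.assoc)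
  then show "(\<Sum>r\<leftarrow>L. 1 / (\<beta> - r))
       = (\<Sum>k<N. 1 / (\<beta> - lam k)) - \<epsilon> / (1 + \<epsilon> * resolvent_form \<beta> i j) * resolvent_sq_form \<beta> i j"
    using gaps(2) unfolding \<kappa>_def by simp
qed

end

section \<open>Partial fractions of the MSD\<close>

text \<open>With \<open>p = 1 - a(\<rho> - \<alpha>)\<close> and \<open>q = 1 + a(\<rho> - \<alpha>) = 2 - p\<close> all denominators become monomials,
  so both partial fraction identities are polynomial identities in \<open>p\<close>, \<open>a\<close>, \<open>\<alpha>\<close>.\<close>
lemma msd_term_partial_fractions_pq:
  fixes a \<alpha> p q :: real
  assumes a: "a \<noteq> 0" and p: "p \<noteq> 0" and q: "q \<noteq> 0" and pq: "q = 2 - p"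
  shows "(\<alpha> + (1 - p) / a)\<^sup>2 / (p * q)
      = - 1 / a\<^sup>2 + (1 + a * \<alpha>)\<^sup>2 / (2 * a ^ 3) / (p / a) + (- (1 - a * \<alpha>)\<^sup>2 / (2 * a ^ 3)) / (- q / a)"
    and "(2 * (1 - \<alpha>\<^sup>2 * a\<^sup>2) * (\<alpha> + (1 - p) / a) + 2 * a\<^sup>2 * \<alpha> * (\<alpha> + (1 - p) / a)\<^sup>2) / (p * q)\<^sup>2
      = (1 + a * \<alpha>)\<^sup>2 / (2 * a ^ 3) / (p / a)\<^sup>2 + (- (1 - a * \<alpha>)\<^sup>2 / (2 * a ^ 3)) / (- q / a)\<^sup>2"
  using a p q
  by (simp_all add: field_simps power2_eq_square power3_eq_cube) (simp_all add: pq algebra_simps)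

lemma msd_term_partial_fractions:
  fixes a \<alpha> \<rho> :: real
  assumes a: "a \<noteq> 0" and poles: "\<rho> \<noteq> \<alpha> + 1 / a" "\<rho> \<noteq> \<alpha> - 1 / a"
  shows "\<rho>\<^sup>2 / (1 - a\<^sup>2 * (\<rho> - \<alpha>)\<^sup>2)
      = - 1 / a\<^sup>2 + (1 + a * \<alpha>)\<^sup>2 / (2 * a ^ 3) / ((\<alpha> + 1 / a) - \<rho>)
        + (- (1 - a * \<alpha>)\<^sup>2 / (2 * a ^ 3)) / ((\<alpha> - 1 / a) - \<rho>)"
    and "(2 * (1 - \<alpha>\<^sup>2 * a\<^sup>2) * \<rho> + 2 * a\<^sup>2 * \<alpha> * \<rho>\<^sup>2) / (1 - a\<^sup>2 * (\<rho> - \<alpha>)\<^sup>2)\<^sup>2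
      = (1 + a * \<alpha>)\<^sup>2 / (2 * a ^ 3) / ((\<alpha> + 1 / a) - \<rho>)\<^sup>2
        + (- (1 - a * \<alpha>)\<^sup>2 / (2 * a ^ 3)) / ((\<alpha> - 1 / a) - \<rho>)\<^sup>2"
proof -
  define p where "p = 1 - a * (\<rho> - \<alpha>)"
  define q where "q = 1 + a * (\<rho> - \<alpha>)"
  have "p \<noteq> 0" using a poles(1) unfolding p_def by (auto simp: field_simps)
  moreover have "q \<noteq> 0" using a poles(2) unfolding q_def by (auto simp: field_simps)
  moreover have "q = 2 - p" unfolding p_def q_def by simp
  ultimately have pq: "(\<alpha> + (1 - p) / a)\<^sup>2 / (p * q)
      = - 1 / a\<^sup>2 + (1 + a * \<alpha>)\<^sup>2 / (2 * a ^ 3) / (p / a) + (- (1 - a * \<alpha>)\<^sup>2 / (2 * a ^ 3)) / (- q / a)"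
    "(2 * (1 - \<alpha>\<^sup>2 * a\<^sup>2) * (\<alpha> + (1 - p) / a) + 2 * a\<^sup>2 * \<alpha> * (\<alpha> + (1 - p) / a)\<^sup>2) / (p * q)\<^sup>2
      = (1 + a * \<alpha>)\<^sup>2 / (2 * a ^ 3) / (p / a)\<^sup>2 + (- (1 - a * \<alpha>)\<^sup>2 / (2 * a ^ 3)) / (- q / a)\<^sup>2"
    using msd_term_partial_fractions_pq[OF a] by blast+
  have \<rho>: "\<alpha> + (1 - p) / a = \<rho>" and den: "1 - a\<^sup>2 * (\<rho> - \<alpha>)\<^sup>2 = p * q"
    and gaps: "(\<alpha> + 1 / a) - \<rho> = p / a" "(\<alpha> - 1 / a) - \<rho> = - q / a"
    using a unfolding p_def q_def by (simp_all add: field_simps power2_eq_square)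
  from pq(1) show "\<rho>\<^sup>2 / (1 - a\<^sup>2 * (\<rho> - \<alpha>)\<^sup>2)
      = - 1 / a\<^sup>2 + (1 + a * \<alpha>)\<^sup>2 / (2 * a ^ 3) / ((\<alpha> + 1 / a) - \<rho>)
        + (- (1 - a * \<alpha>)\<^sup>2 / (2 * a ^ 3)) / ((\<alpha> - 1 / a) - \<rho>)"
    unfolding \<rho> den gaps .
  from pq(2) show "(2 * (1 - \<alpha>\<^sup>2 * a\<^sup>2) * \<rho> + 2 * a\<^sup>2 * \<alpha> * \<rho>\<^sup>2) / (1 - a\<^sup>2 * (\<rho> - \<alpha>)\<^sup>2)\<^sup>2
      = (1 + a * \<alpha>)\<^sup>2 / (2 * a ^ 3) / ((\<alpha> + 1 / a) - \<rho>)\<^sup>2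
        + (- (1 - a * \<alpha>)\<^sup>2 / (2 * a ^ 3)) / ((\<alpha> - 1 / a) - \<rho>)\<^sup>2"
    unfolding \<rho> den gaps .
qed

lemma sum_list_msd_term_partial_fractions:
  fixes a \<alpha> :: real and L :: "real list"
  assumes a: "a \<noteq> 0" and poles: "\<alpha> + 1 / a \<notin> set L" "\<alpha> - 1 / a \<notin> set L"
  shows "(\<Sum>l\<leftarrow>L. l\<^sup>2 / (1 - a\<^sup>2 * (l - \<alpha>)\<^sup>2))
      = real (length L) * (- 1 / a\<^sup>2)
        + (1 + a * \<alpha>)\<^sup>2 / (2 * a ^ 3) * (\<Sum>l\<leftarrow>L. 1 / ((\<alpha> + 1 / a) - l))
        + (- (1 - a * \<alpha>)\<^sup>2 / (2 * a ^ 3)) * (\<Sum>l\<leftarrow>L. 1 / ((\<alpha> - 1 / a) - l))"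
  using poles
proof (induction L)
  case (Cons l L)
  let ?A = "(1 + a * \<alpha>)\<^sup>2 / (2 * a ^ 3)" and ?B = "- (1 - a * \<alpha>)\<^sup>2 / (2 * a ^ 3)"
  have "l \<noteq> \<alpha> + 1 / a" "l \<noteq> \<alpha> - 1 / a" using Cons.prems by auto
  then have head: "l\<^sup>2 / (1 - a\<^sup>2 * (l - \<alpha>)\<^sup>2)
      = - 1 / a\<^sup>2 + ?A * (1 / ((\<alpha> + 1 / a) - l)) + ?B * (1 / ((\<alpha> - 1 / a) - l))"
    using msd_term_partial_fractions(1)[OF a] by simp
  have step: "\<And>g G k A B t s S T (n :: real). g = k + A * t + B * s \<Longrightarrow> G = n * k + A * S + B * T \<Longrightarrow>
      g + G = (n + 1) * k + A * (t + S) + B * (s + T)" by (simp add: algebra_simps)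
  have "(\<Sum>l\<leftarrow>l # L. l\<^sup>2 / (1 - a\<^sup>2 * (l - \<alpha>)\<^sup>2))
      = l\<^sup>2 / (1 - a\<^sup>2 * (l - \<alpha>)\<^sup>2) + (\<Sum>l\<leftarrow>L. l\<^sup>2 / (1 - a\<^sup>2 * (l - \<alpha>)\<^sup>2))"
    by simp
  also have "\<dots> = (real (length L) + 1) * (- 1 / a\<^sup>2)
      + ?A * (1 / ((\<alpha> + 1 / a) - l) + (\<Sum>l\<leftarrow>L. 1 / ((\<alpha> + 1 / a) - l)))
      + ?B * (1 / ((\<alpha> - 1 / a) - l) + (\<Sum>l\<leftarrow>L. 1 / ((\<alpha> - 1 / a) - l)))"
    using Cons by (intro step[OF head]) auto
  finally show ?case by (simp only: list.map sum_list.Cons list.size(4) of_nat_add) simp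
qed simp

lemma msd_tilde_eq_inverse_root_gaps:
  assumes a: "a \<noteq> 0" and split: "char_poly M = (\<Prod>r\<leftarrow>L. [:-r, 1:])" and len: "length L = N"
    and poles: "\<alpha> + 1 / a \<notin> set L" "\<alpha> - 1 / a \<notin> set L"
  shows "msd_tilde N a sr sw M \<alpha> = sr\<^sup>2 / (1 - a\<^sup>2 * (1 - \<alpha>)\<^sup>2)
      + a\<^sup>2 * \<alpha>\<^sup>2 * sw\<^sup>2 / real N * (real N * (- 1 / a\<^sup>2)
        + (1 + a * \<alpha>)\<^sup>2 / (2 * a ^ 3) * (\<Sum>l\<leftarrow>L. 1 / ((\<alpha> + 1 / a) - l))
        + (- (1 - a * \<alpha>)\<^sup>2 / (2 * a ^ 3)) * (\<Sum>l\<leftarrow>L. 1 / ((\<alpha> - 1 / a) - l)))"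
proof -
  have "eigs M = mset L" unfolding eigs_def split by (rule proots_prod_linear)
  then have "sum_mset (image_mset (\<lambda>l. a\<^sup>2 * \<alpha>\<^sup>2 * sw\<^sup>2 * l\<^sup>2 / (1 - a\<^sup>2 * (l - \<alpha>)\<^sup>2)) (eigs M))
      = a\<^sup>2 * \<alpha>\<^sup>2 * sw\<^sup>2 * (\<Sum>l\<leftarrow>L. l\<^sup>2 / (1 - a\<^sup>2 * (l - \<alpha>)\<^sup>2))"
    by (simp add: mset_map[symmetric] sum_mset_sum_list sum_list_const_mult[symmetric] mult.assoc del: mset_map)
  then show ?thesis
    unfolding msd_tilde_def sum_list_msd_term_partial_fractions[OF a poles] len by simp
qed

lemma hk_eq:
  assumes vk: "vk \<in> carrier_vec N" and ij: "i < N" "j < N" "i \<noteq> j"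
  shows "hk N a \<alpha> \<epsilon> l vk i j = - (\<epsilon> * (vk $ i - vk $ j)\<^sup>2)
      * ((2 * (1 - \<alpha>\<^sup>2 * a\<^sup>2) * l + 2 * a\<^sup>2 * \<alpha> * l\<^sup>2) / (1 - a\<^sup>2 * (l - \<alpha>)\<^sup>2)\<^sup>2)"
  unfolding hk_def zk_def quadratic_form_deltaP[OF vk ij] by simp

lemma not_pole_if_stable:
  fixes a \<alpha> l :: real
  assumes "\<bar>a * (l - \<alpha>)\<bar> < 1" "a \<noteq> 0"
  shows "l \<noteq> \<alpha> + 1 / a" and "l \<noteq> \<alpha> - 1 / a"
proof -
  have "a * ((\<alpha> + 1 / a) - \<alpha>) = 1" "a * ((\<alpha> - 1 / a) - \<alpha>) = - 1"
    using assms(2) by (simp_all add: field_simps)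
  then show "l \<noteq> \<alpha> + 1 / a" "l \<noteq> \<alpha> - 1 / a" using assms(1) by auto
qed

section \<open>Perturbation by a new edge\<close>

lemma Min_image_mono:
  fixes f g :: "'a \<Rightarrow> 'b :: linorder"
  assumes "finite A" "A \<noteq> {}" "\<And>x. x \<in> A \<Longrightarrow> g x \<le> f x"
  shows "Min (g ` A) \<le> Min (f ` A)"
proof -
  have "Min (f ` A) \<in> f ` A" using assms(1,2) by (intro Min_in) auto
  then obtain x where "x \<in> A" "Min (f ` A) = f x" by auto
  then show ?thesis using assms by (metis Min_le finite_imageI image_eqI order_trans)
qed

context orthonormal_eigenbasis
begin

lemma transpose_update_eq_self: "(P + \<epsilon> \<cdot>\<^sub>m deltaP N i j)\<^sup>T = P + \<epsilon> \<cdot>\<^sub>m deltaP N i j"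
proof (rule eq_matI)
  fix r s assume "r < dim_row (P + \<epsilon> \<cdot>\<^sub>m deltaP N i j)" "s < dim_col (P + \<epsilon> \<cdot>\<^sub>m deltaP N i j)"
  then have "r < N" "s < N" using carrier deltaP_carrier[of N i j] by auto
  then show "(P + \<epsilon> \<cdot>\<^sub>m deltaP N i j)\<^sup>T $$ (r, s) = (P + \<epsilon> \<cdot>\<^sub>m deltaP N i j) $$ (r, s)"
    using carrier deltaP_carrier[of N i j] by (simp add: index_deltaP spectral_decomposition mult_ac)
qed (use carrier deltaP_carrier[of N i j] in auto)

lemma sum_hk_eq:
  assumes a: "a \<noteq> 0" and stable: "\<forall>k<N. \<bar>a * (lam k - \<alpha>)\<bar> < 1"
    and ij: "i < N" "j < N" "i \<noteq> j"
  shows "(\<Sum>k<N. hk N a \<alpha> \<epsilon> (lam k) (v k) i j)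
      = - \<epsilon> * ((1 + a * \<alpha>)\<^sup>2 / (2 * a ^ 3) * resolvent_sq_form (\<alpha> + 1 / a) i j
               + (- (1 - a * \<alpha>)\<^sup>2 / (2 * a ^ 3)) * resolvent_sq_form (\<alpha> - 1 / a) i j)"
proof -
  let ?A = "(1 + a * \<alpha>)\<^sup>2 / (2 * a ^ 3)" and ?B = "- (1 - a * \<alpha>)\<^sup>2 / (2 * a ^ 3)"
  have "hk N a \<alpha> \<epsilon> (lam k) (v k) i j
      = - \<epsilon> * (?A * ((v k $ i - v k $ j) / ((\<alpha> + 1 / a) - lam k))\<^sup>2
               + ?B * ((v k $ i - v k $ j) / ((\<alpha> - 1 / a) - lam k))\<^sup>2)" if "k < N" for k
    unfolding hk_eq[OF eigvec_carrier[OF that] ij]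
      msd_term_partial_fractions(2)[OF a not_pole_if_stable[OF stable[rule_format, OF that] a]]
    by (simp add: power_divide algebra_simps)
  then have "(\<Sum>k<N. hk N a \<alpha> \<epsilon> (lam k) (v k) i j)
      = (\<Sum>k<N. - \<epsilon> * (?A * ((v k $ i - v k $ j) / ((\<alpha> + 1 / a) - lam k))\<^sup>2
               + ?B * ((v k $ i - v k $ j) / ((\<alpha> - 1 / a) - lam k))\<^sup>2))"
    by simp
  then show ?thesis
    unfolding resolvent_sq_form_def by (simp only: sum.distrib sum_distrib_left[symmetric])
qed

lemma msd_tilde_update_eq:
  assumes a: "a \<noteq> 0" and stable: "\<forall>k<N. \<bar>a * (lam k - \<alpha>)\<bar> < 1"
    and ij: "i < N" "j < N" "i \<noteq> j"
    and nz: "1 + \<epsilon> * resolvent_form (\<alpha> + 1 / a) i j \<noteq> 0" "1 + \<epsilon> * resolvent_form (\<alpha> - 1 / a) i j \<noteq> 0"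
  shows "msd_tilde N a sr sw (P + \<epsilon> \<cdot>\<^sub>m deltaP N i j) \<alpha> = sr\<^sup>2 / (1 - a\<^sup>2 * (1 - \<alpha>)\<^sup>2)
      + a\<^sup>2 * \<alpha>\<^sup>2 * sw\<^sup>2 / real N * (real N * (- 1 / a\<^sup>2)
        + (1 + a * \<alpha>)\<^sup>2 / (2 * a ^ 3) * ((\<Sum>k<N. 1 / ((\<alpha> + 1 / a) - lam k))
            - \<epsilon> / (1 + \<epsilon> * resolvent_form (\<alpha> + 1 / a) i j) * resolvent_sq_form (\<alpha> + 1 / a) i j)
        + (- (1 - a * \<alpha>)\<^sup>2 / (2 * a ^ 3)) * ((\<Sum>k<N. 1 / ((\<alpha> - 1 / a) - lam k))
            - \<epsilon> / (1 + \<epsilon> * resolvent_form (\<alpha> - 1 / a) i j) * resolvent_sq_form (\<alpha> - 1 / a) i j))"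
proof -
  have poles: "\<And>k. k < N \<Longrightarrow> \<alpha> + 1 / a \<noteq> lam k" "\<And>k. k < N \<Longrightarrow> \<alpha> - 1 / a \<noteq> lam k"
    using not_pole_if_stable a stable by metis+
  have P\<epsilon>: "P + \<epsilon> \<cdot>\<^sub>m deltaP N i j \<in> carrier_mat N N" using carrier deltaP_carrier by auto
  obtain L where L: "char_poly (P + \<epsilon> \<cdot>\<^sub>m deltaP N i j) = (\<Prod>r\<leftarrow>L. [:-r, 1:])" "length L = N"
    using char_poly_symmetric_splits[OF P\<epsilon> transpose_update_eq_self] by blast
  have gaps: "\<alpha> + 1 / a \<notin> set L" "\<alpha> - 1 / a \<notin> set L"
      "(\<Sum>r\<leftarrow>L. 1 / ((\<alpha> + 1 / a) - r)) = (\<Sum>k<N. 1 / ((\<alpha> + 1 / a) - lam k))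
         - \<epsilon> / (1 + \<epsilon> * resolvent_form (\<alpha> + 1 / a) i j) * resolvent_sq_form (\<alpha> + 1 / a) i j"
      "(\<Sum>r\<leftarrow>L. 1 / ((\<alpha> - 1 / a) - r)) = (\<Sum>k<N. 1 / ((\<alpha> - 1 / a) - lam k))
         - \<epsilon> / (1 + \<epsilon> * resolvent_form (\<alpha> - 1 / a) i j) * resolvent_sq_form (\<alpha> - 1 / a) i j"
    using sum_inverse_root_gaps_char_poly_update[of _ i j \<epsilon> L] poles ij nz L(1) by blast+
  show ?thesis
    using msd_tilde_eq_inverse_root_gaps[OF a L gaps(1,2)] unfolding gaps(3,4) .
qed

lemma msd_tilde_update_remainder:
  assumes a: "a \<noteq> 0" and stable: "\<forall>k<N. \<bar>a * (lam k - \<alpha>)\<bar> < 1"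
    and ij: "i < N" "j < N" "i \<noteq> j"
    and nz: "1 + \<epsilon> * resolvent_form (\<alpha> + 1 / a) i j \<noteq> 0" "1 + \<epsilon> * resolvent_form (\<alpha> - 1 / a) i j \<noteq> 0"
  shows "msd_tilde N a sr sw (P + \<epsilon> \<cdot>\<^sub>m deltaP N i j) \<alpha> - msd_tilde N a sr sw P \<alpha>
      - a\<^sup>2 * \<alpha>\<^sup>2 * sw\<^sup>2 / real N * (\<Sum>k<N. hk N a \<alpha> \<epsilon> (lam k) (v k) i j)
    = \<epsilon>\<^sup>2 * (a\<^sup>2 * \<alpha>\<^sup>2 * sw\<^sup>2 / real N
      * ((1 + a * \<alpha>)\<^sup>2 / (2 * a ^ 3) * (resolvent_form (\<alpha> + 1 / a) i j * resolvent_sq_form (\<alpha> + 1 / a) i j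
            / (1 + \<epsilon> * resolvent_form (\<alpha> + 1 / a) i j))
         + (- (1 - a * \<alpha>)\<^sup>2 / (2 * a ^ 3)) * (resolvent_form (\<alpha> - 1 / a) i j * resolvent_sq_form (\<alpha> - 1 / a) i j
            / (1 + \<epsilon> * resolvent_form (\<alpha> - 1 / a) i j))))"
proof -
  define g where "g = a\<^sup>2 * \<alpha>\<^sup>2 * sw\<^sup>2 / real N"
  define A where "A = (1 + a * \<alpha>)\<^sup>2 / (2 * a ^ 3)"
  define B where "B = - (1 - a * \<alpha>)\<^sup>2 / (2 * a ^ 3)"
  define d1 where "d1 = resolvent_form (\<alpha> + 1 / a) i j"
  define d2 where "d2 = resolvent_form (\<alpha> - 1 / a) i j"
  define Y1 where "Y1 = resolvent_sq_form (\<alpha> + 1 / a) i j"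
  define Y2 where "Y2 = resolvent_sq_form (\<alpha> - 1 / a) i j"
  define \<kappa>1 where "\<kappa>1 = \<epsilon> / (1 + \<epsilon> * d1)"
  define \<kappa>2 where "\<kappa>2 = \<epsilon> / (1 + \<epsilon> * d2)"
  have "P + 0 \<cdot>\<^sub>m deltaP N i j = P" by (rule eq_matI) (use carrier deltaP_carrier[of N i j] in auto)
  then have msd_P: "msd_tilde N a sr sw P \<alpha> = sr\<^sup>2 / (1 - a\<^sup>2 * (1 - \<alpha>)\<^sup>2) + g * (real N * (- 1 / a\<^sup>2)
      + A * (\<Sum>k<N. 1 / ((\<alpha> + 1 / a) - lam k)) + B * (\<Sum>k<N. 1 / ((\<alpha> - 1 / a) - lam k)))"
    using msd_tilde_update_eq[OF a stable ij, of 0] unfolding g_def A_def B_def by simp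
  have msd_P\<epsilon>: "msd_tilde N a sr sw (P + \<epsilon> \<cdot>\<^sub>m deltaP N i j) \<alpha> = sr\<^sup>2 / (1 - a\<^sup>2 * (1 - \<alpha>)\<^sup>2)
      + g * (real N * (- 1 / a\<^sup>2) + A * ((\<Sum>k<N. 1 / ((\<alpha> + 1 / a) - lam k)) - \<kappa>1 * Y1)
        + B * ((\<Sum>k<N. 1 / ((\<alpha> - 1 / a) - lam k)) - \<kappa>2 * Y2))"
    using msd_tilde_update_eq[OF a stable ij nz]
    unfolding g_def A_def B_def \<kappa>1_def \<kappa>2_def d1_def d2_def Y1_def Y2_def .
  have hk: "(\<Sum>k<N. hk N a \<alpha> \<epsilon> (lam k) (v k) i j) = - \<epsilon> * (A * Y1 + B * Y2)"
    unfolding sum_hk_eq[OF a stable ij] A_def B_def Y1_def Y2_def ..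
  have correction: "\<epsilon> - \<epsilon> / (1 + \<epsilon> * d) = \<epsilon>\<^sup>2 * (d / (1 + \<epsilon> * d))" if "1 + \<epsilon> * d \<noteq> 0" for d
    using that by (simp add: field_simps power2_eq_square)
  have "msd_tilde N a sr sw (P + \<epsilon> \<cdot>\<^sub>m deltaP N i j) \<alpha> - msd_tilde N a sr sw P \<alpha>
      - g * (\<Sum>k<N. hk N a \<alpha> \<epsilon> (lam k) (v k) i j)
      = g * (A * Y1 * (\<epsilon> - \<kappa>1) + B * Y2 * (\<epsilon> - \<kappa>2))"
    unfolding msd_P msd_P\<epsilon> hk by (simp add: algebra_simps)
  also have "\<dots> = \<epsilon>\<^sup>2 * (g * (A * (d1 * Y1 / (1 + \<epsilon> * d1)) + B * (d2 * Y2 / (1 + \<epsilon> * d2))))"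
    unfolding \<kappa>1_def \<kappa>2_def correction[OF nz(1)[folded d1_def]] correction[OF nz(2)[folded d2_def]]
    by (simp add: algebra_simps)
  finally show ?thesis unfolding g_def A_def B_def d1_def d2_def Y1_def Y2_def .
qed

lemma msd_tilde_first_order_expansion:
  assumes stable: "\<forall>k<N. \<bar>a * (lam k - \<alpha>)\<bar> < 1"
    and ij: "i < N" "j < N" "i \<noteq> j"
  shows "(\<lambda>\<epsilon>. msd_tilde N a sr sw (P + \<epsilon> \<cdot>\<^sub>m deltaP N i j) \<alpha> - msd_tilde N a sr sw P \<alpha>
            - a\<^sup>2 * \<alpha>\<^sup>2 * sw\<^sup>2 / real N * (\<Sum>k<N. hk N a \<alpha> \<epsilon> (lam k) (v k) i j))
         \<in> O[at_right 0](\<lambda>\<epsilon>. \<epsilon>\<^sup>2)"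
    (is "?\<phi> \<in> _")
proof (cases "a = 0")
  case True
  then show ?thesis by (simp add: msd_tilde_def)
next
  case a: False
  define d1 where "d1 = resolvent_form (\<alpha> + 1 / a) i j"
  define d2 where "d2 = resolvent_form (\<alpha> - 1 / a) i j"
  define \<psi> where "\<psi> = (\<lambda>\<epsilon>. a\<^sup>2 * \<alpha>\<^sup>2 * sw\<^sup>2 / real N
      * ((1 + a * \<alpha>)\<^sup>2 / (2 * a ^ 3) * (d1 * resolvent_sq_form (\<alpha> + 1 / a) i j / (1 + \<epsilon> * d1))
         + (- (1 - a * \<alpha>)\<^sup>2 / (2 * a ^ 3)) * (d2 * resolvent_sq_form (\<alpha> - 1 / a) i j / (1 + \<epsilon> * d2))))"
  have near_one: "((\<lambda>\<epsilon>. 1 + \<epsilon> * d) \<longlongrightarrow> 1) (at_right 0)" for d :: real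
    by (rule tendsto_eq_intros refl | simp)+
  have "\<forall>\<^sub>F \<epsilon> in at_right 0. 0 < (\<epsilon> :: real)" by (rule eventually_at_right_less)
  moreover have "\<forall>\<^sub>F \<epsilon> in at_right 0. 0 < 1 + \<epsilon> * d1" "\<forall>\<^sub>F \<epsilon> in at_right 0. 0 < 1 + \<epsilon> * d2"
    using order_tendstoD(1)[OF near_one, of 0] by simp_all
  ultimately have remainder: "\<forall>\<^sub>F \<epsilon> in at_right 0. \<psi> \<epsilon> = ?\<phi> \<epsilon> / \<epsilon>\<^sup>2 \<and> \<epsilon>\<^sup>2 \<noteq> 0"
  proof eventually_elim
    case (elim \<epsilon>)
    have "?\<phi> \<epsilon> = \<epsilon>\<^sup>2 * \<psi> \<epsilon>"
      using elim unfolding \<psi>_def d1_def d2_def by (subst msd_tilde_update_remainder[OF a stable ij]) auto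
    with elim show ?case by simp
  qed
  have "(\<psi> \<longlongrightarrow> \<psi> 0) (at_right 0)"
    unfolding \<psi>_def by (intro tendsto_intros near_one) auto
  then have "((\<lambda>\<epsilon>. ?\<phi> \<epsilon> / \<epsilon>\<^sup>2) \<longlongrightarrow> \<psi> 0) (at_right 0)"
    using remainder by (rule Lim_transform_eventually[OF _ eventually_mono]) simp
  moreover have "\<forall>\<^sub>F \<epsilon> in at_right 0. \<epsilon>\<^sup>2 \<noteq> (0 :: real)"
    using remainder by (rule eventually_mono) simp
  ultimately show ?thesis by (rule bigoI_tendsto)
qed

lemma sum_sq_eigvec_diff_msd_weights:
  assumes ij: "i < N" "j < N" and non_edge: "P $$ (i, j) = 0"
  shows "(\<Sum>k<N. (v k $ i - v k $ j)\<^sup>2 * (2 * (1 - \<alpha>\<^sup>2 * a\<^sup>2) * lam k + 2 * a\<^sup>2 * \<alpha> * (lam k)\<^sup>2))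
    = 2 * ((1 - \<alpha>\<^sup>2 * a\<^sup>2) * (P $$ (i, i) + P $$ (j, j))
        + a\<^sup>2 * \<alpha> * ((P * P) $$ (i, i) + (P * P) $$ (j, j) - 2 * (P * P) $$ (i, j)))"
proof -
  have "(\<Sum>k<N. (v k $ i - v k $ j)\<^sup>2 * (2 * (1 - \<alpha>\<^sup>2 * a\<^sup>2) * lam k + 2 * a\<^sup>2 * \<alpha> * (lam k)\<^sup>2))
      = 2 * (1 - \<alpha>\<^sup>2 * a\<^sup>2) * (\<Sum>k<N. (v k $ i - v k $ j)\<^sup>2 * lam k)
        + 2 * a\<^sup>2 * \<alpha> * (\<Sum>k<N. (v k $ i - v k $ j)\<^sup>2 * (lam k)\<^sup>2)"
    unfolding sum_distrib_left sum.distrib[symmetric] by (intro sum.cong refl) (simp add: algebra_simps)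
  also have "(\<Sum>k<N. (v k $ i - v k $ j)\<^sup>2 * lam k) = P $$ (i, i) + P $$ (j, j)"
    using ij non_edge
    by (subst sum_sq_eigvec_diff[where Q = "\<lambda>r s. P $$ (r, s)" and \<mu> = lam]) (auto simp: spectral_decomposition)
  also have "(\<Sum>k<N. (v k $ i - v k $ j)\<^sup>2 * (lam k)\<^sup>2) = (P * P) $$ (i, i) + (P * P) $$ (j, j) - 2 * (P * P) $$ (i, j)"
    using ij
    by (intro sum_sq_eigvec_diff[where Q = "\<lambda>r s. (P * P) $$ (r, s)" and \<mu> = "\<lambda>k. (lam k)\<^sup>2"])
      (auto simp: spectral_decomposition_square)
  finally show ?thesis by (simp add: algebra_simps)
qed

lemma max_gap_denominator_le:
  assumes "k \<in> {1..<N}"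
  shows "1 - a\<^sup>2 * (Max ((\<lambda>k. \<bar>lam k - \<alpha>\<bar>) ` {1..<N}))\<^sup>2 \<le> 1 - a\<^sup>2 * (lam k - \<alpha>)\<^sup>2"
proof -
  have "\<bar>lam k - \<alpha>\<bar> \<le> Max ((\<lambda>k. \<bar>lam k - \<alpha>\<bar>) ` {1..<N})" using assms by simp
  then have "(lam k - \<alpha>)\<^sup>2 \<le> (Max ((\<lambda>k. \<bar>lam k - \<alpha>\<bar>) ` {1..<N}))\<^sup>2"
    by (metis abs_ge_zero order_trans power2_abs power_mono)
  then show ?thesis by (simp add: mult_left_mono)
qed

lemma max_gap_denominator_pos:
  assumes N: "1 < N" and stable: "\<forall>k<N. \<bar>a * (lam k - \<alpha>)\<bar> < 1"
  shows "0 < 1 - a\<^sup>2 * (Max ((\<lambda>k. \<bar>lam k - \<alpha>\<bar>) ` {1..<N}))\<^sup>2"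
proof -
  have "Max ((\<lambda>k. \<bar>lam k - \<alpha>\<bar>) ` {1..<N}) \<in> (\<lambda>k. \<bar>lam k - \<alpha>\<bar>) ` {1..<N}"
    using N by (intro Max_in) auto
  then obtain k where k: "k \<in> {1..<N}" "Max ((\<lambda>k. \<bar>lam k - \<alpha>\<bar>) ` {1..<N}) = \<bar>lam k - \<alpha>\<bar>" by auto
  then have "(a * (lam k - \<alpha>))\<^sup>2 < 1" using stable by (simp add: abs_square_less_1)
  then show ?thesis unfolding k(2) by (simp add: power_mult_distrib)
qed

lemma sum_hk_lower_bound:
  assumes N: "1 < N" and \<alpha>: "0 \<le> \<alpha>" "\<alpha>\<^sup>2 * a\<^sup>2 \<le> 1" and \<epsilon>: "0 \<le> \<epsilon>"
    and psd: "\<And>x. x \<in> carrier_vec N \<Longrightarrow> 0 \<le> x \<bullet> (P *\<^sub>v x)"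
    and stable: "\<forall>k<N. \<bar>a * (lam k - \<alpha>)\<bar> < 1"
    and ij: "i < N" "j < N" "i \<noteq> j" and non_edge: "P $$ (i, j) = 0"
    and consensus: "v 0 $ i = v 0 $ j"
  shows "- 2 * \<epsilon> * ((1 - \<alpha>\<^sup>2 * a\<^sup>2) * (P $$ (i, i) + P $$ (j, j))
            + a\<^sup>2 * \<alpha> * ((P * P) $$ (i, i) + (P * P) $$ (j, j) - 2 * (P * P) $$ (i, j)))
          / (1 - a\<^sup>2 * (Max ((\<lambda>k. \<bar>lam k - \<alpha>\<bar>) ` {1..<N}))\<^sup>2)\<^sup>2
         \<le> (\<Sum>k<N. hk N a \<alpha> \<epsilon> (lam k) (v k) i j)"
proof -
  define \<zeta> where "\<zeta> = Max ((\<lambda>k. \<bar>lam k - \<alpha>\<bar>) ` {1..<N})"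
  define E where "E = 1 - a\<^sup>2 * \<zeta>\<^sup>2"
  define F where "F = (\<lambda>l :: real. 2 * (1 - \<alpha>\<^sup>2 * a\<^sup>2) * l + 2 * a\<^sup>2 * \<alpha> * l\<^sup>2)"
  define w where "w = (\<lambda>k. v k $ i - v k $ j)"
  note E_pos = max_gap_denominator_pos[OF N stable, folded \<zeta>_def E_def]
    and E_le = max_gap_denominator_le[where a = a and \<alpha> = \<alpha>, folded \<zeta>_def E_def]
  have F_nonneg: "0 \<le> F (lam k)" if "k < N" for k
  proof -
    have "0 \<le> lam k" using psd[OF eigvec_carrier[OF that]] eigenvalue_eq_quadratic_form[OF that] by simp
    then show ?thesis unfolding F_def using \<alpha> by (intro add_nonneg_nonneg mult_nonneg_nonneg) auto
  qed
  have termwise: "- (\<epsilon> * (w k)\<^sup>2) * (F (lam k) / E\<^sup>2) \<le> hk N a \<alpha> \<epsilon> (lam k) (v k) i j" if "k < N" for k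
  proof (cases "k = 0")
    case True
    then show ?thesis unfolding hk_eq[OF eigvec_carrier[OF that] ij] w_def using consensus by simp
  next
    case False
    then have k: "k \<in> {1..<N}" using that by simp
    have "E\<^sup>2 \<le> (1 - a\<^sup>2 * (lam k - \<alpha>)\<^sup>2)\<^sup>2" using E_le[OF k] E_pos by (simp add: power_mono)
    then have "F (lam k) / (1 - a\<^sup>2 * (lam k - \<alpha>)\<^sup>2)\<^sup>2 \<le> F (lam k) / E\<^sup>2"
      using E_pos F_nonneg[OF that] E_le[OF k] by (intro divide_left_mono) auto
    moreover have "- (\<epsilon> * (w k)\<^sup>2) \<le> 0" using \<epsilon> by simp
    ultimately have "- (\<epsilon> * (w k)\<^sup>2) * (F (lam k) / E\<^sup>2)
        \<le> - (\<epsilon> * (w k)\<^sup>2) * (F (lam k) / (1 - a\<^sup>2 * (lam k - \<alpha>)\<^sup>2)\<^sup>2)"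
      by (rule mult_left_mono_neg)
    then show ?thesis unfolding hk_eq[OF eigvec_carrier[OF that] ij] F_def w_def .
  qed
  have "(\<Sum>k<N. - (\<epsilon> * (w k)\<^sup>2) * (F (lam k) / E\<^sup>2)) = - (\<epsilon> / E\<^sup>2) * (\<Sum>k<N. (w k)\<^sup>2 * F (lam k))"
    unfolding sum_distrib_left by (intro sum.cong refl) (simp add: mult_ac)
  also have "\<dots> = - 2 * \<epsilon> * ((1 - \<alpha>\<^sup>2 * a\<^sup>2) * (P $$ (i, i) + P $$ (j, j))
            + a\<^sup>2 * \<alpha> * ((P * P) $$ (i, i) + (P * P) $$ (j, j) - 2 * (P * P) $$ (i, j))) / E\<^sup>2"
    unfolding F_def w_def sum_sq_eigvec_diff_msd_weights[OF ij(1,2) non_edge] by simp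
  finally have "(\<Sum>k<N. - (\<epsilon> * (w k)\<^sup>2) * (F (lam k) / E\<^sup>2))
      = - 2 * \<epsilon> * ((1 - \<alpha>\<^sup>2 * a\<^sup>2) * (P $$ (i, i) + P $$ (j, j))
            + a\<^sup>2 * \<alpha> * ((P * P) $$ (i, i) + (P * P) $$ (j, j) - 2 * (P * P) $$ (i, j))) / E\<^sup>2" .
  moreover have "(\<Sum>k<N. - (\<epsilon> * (w k)\<^sup>2) * (F (lam k) / E\<^sup>2)) \<le> (\<Sum>k<N. hk N a \<alpha> \<epsilon> (lam k) (v k) i j)"
    using termwise by (intro sum_mono) simp
  ultimately show ?thesis unfolding E_def \<zeta>_def by linarith
qed

lemma Min_sum_hk_lower_bound:
  assumes N: "1 < N" and \<alpha>: "0 \<le> \<alpha>" "\<alpha>\<^sup>2 * a\<^sup>2 \<le> 1" and \<epsilon>: "0 \<le> \<epsilon>"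
    and nonneg: "\<And>i j. i < N \<Longrightarrow> j < N \<Longrightarrow> 0 \<le> P $$ (i, j)"
    and psd: "\<And>x. x \<in> carrier_vec N \<Longrightarrow> 0 \<le> x \<bullet> (P *\<^sub>v x)"
    and stable: "\<forall>k<N. \<bar>a * (lam k - \<alpha>)\<bar> < 1"
    and consensus: "\<And>i j. i < N \<Longrightarrow> j < N \<Longrightarrow> v 0 $ i = v 0 $ j"
    and nonedge_exists: "\<exists>i j. i < j \<and> j < N \<and> \<not> P $$ (i, j) > 0"
  shows "let NE = {(i, j). i < j \<and> j < N \<and> \<not> P $$ (i, j) > 0};
            \<zeta>max = Max ((\<lambda>k. \<bar>lam k - \<alpha>\<bar>) ` {1..<N})
        in Min ((\<lambda>(i, j). \<Sum>k<N. hk N a \<alpha> \<epsilon> (lam k) (v k) i j) ` NE)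
           \<ge> Min ((\<lambda>(i, j). - 2 * \<epsilon> * ((1 - \<alpha>\<^sup>2 * a\<^sup>2) * (P $$ (i, i) + P $$ (j, j))
                   + a\<^sup>2 * \<alpha> * ((P * P) $$ (i, i) + (P * P) $$ (j, j) - 2 * (P * P) $$ (i, j)))
                   / (1 - a\<^sup>2 * \<zeta>max\<^sup>2)\<^sup>2) ` NE)"
  unfolding Let_def
proof (rule Min_image_mono)
  let ?NE = "{(i, j). i < j \<and> j < N \<and> \<not> P $$ (i, j) > 0}"
  show "finite ?NE" by (rule finite_subset[of _ "{..<N} \<times> {..<N}"]) auto
  show "?NE \<noteq> {}" using nonedge_exists by auto
  fix x assume "x \<in> ?NE"
  then obtain i j where x: "x = (i, j)" "i < j" "j < N" "\<not> P $$ (i, j) > 0" by (cases x) auto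
  then have "P $$ (i, j) = 0" using nonneg[of i j] by simp
  show "(\<lambda>(i, j). - 2 * \<epsilon> * ((1 - \<alpha>\<^sup>2 * a\<^sup>2) * (P $$ (i, i) + P $$ (j, j))
               + a\<^sup>2 * \<alpha> * ((P * P) $$ (i, i) + (P * P) $$ (j, j) - 2 * (P * P) $$ (i, j)))
               / (1 - a\<^sup>2 * (Max ((\<lambda>k. \<bar>lam k - \<alpha>\<bar>) ` {1..<N}))\<^sup>2)\<^sup>2) x
      \<le> (\<lambda>(i, j). \<Sum>k<N. hk N a \<alpha> \<epsilon> (lam k) (v k) i j) x"
    unfolding x(1) prod.case
    using x \<open>P $$ (i, j) = 0\<close> consensus[of i j]
    by (intro sum_hk_lower_bound N \<alpha> \<epsilon> psd stable) auto
qed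

end

theorem proposition3:
  fixes N :: nat and a \<alpha> sr sw :: real and P :: "real mat"
    and lam :: "nat \<Rightarrow> real" and v :: "nat \<Rightarrow> real vec"
  assumes N: "N \<ge> 2"
    and alpha: "0 < \<alpha>" "\<alpha> \<le> 1"
    and P_carrier: "P \<in> carrier_mat N N"
    and P_sym: "P\<^sup>T = P"
    and P_nonneg: "\<And>i j. i < N \<Longrightarrow> j < N \<Longrightarrow> P $$ (i, j) \<ge> 0"
    and P_rows: "\<And>i. i < N \<Longrightarrow> (\<Sum>j<N. P $$ (i, j)) = 1"
    and P_cols: "\<And>j. j < N \<Longrightarrow> (\<Sum>i<N. P $$ (i, j)) = 1"
    and P_psd: "\<And>x. x \<in> carrier_vec N \<Longrightarrow> 0 \<le> x \<bullet> (P *\<^sub>v x)"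
    and v_carrier: "\<And>k. k < N \<Longrightarrow> v k \<in> carrier_vec N"
    and v_eig: "\<And>k. k < N \<Longrightarrow> P *\<^sub>v v k = lam k \<cdot>\<^sub>v v k"
    and v_orth: "\<And>k l. k < N \<Longrightarrow> l < N \<Longrightarrow> v k \<bullet> v l = (if k = l then 1 else 0)"
    and v0: "v 0 = (1 / sqrt (real N)) \<cdot>\<^sub>v vec N (\<lambda>_. 1)"
    and lam0: "lam 0 = 1"
    and lam1: "lam 1 < 1"
    and lam_sorted: "\<And>k. 1 \<le> k \<Longrightarrow> k + 1 < N \<Longrightarrow> lam (k + 1) \<le> lam k"
    and lamN: "-1 < lam (N - 1)"
    and a_bound: "\<bar>a\<bar> < 1 / \<bar>\<alpha>\<bar>"
    and rho: "spectral_radius (map_mat complex_of_real (a \<cdot>\<^sub>m (P - \<alpha> \<cdot>\<^sub>m one_mat N))) < 1"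
    and nonedge_exists: "\<exists>i j. i < j \<and> j < N \<and> \<not> P $$ (i, j) > 0"
  shows
    "(\<forall>i j. i < j \<and> j < N \<and> \<not> P $$ (i, j) > 0 \<longrightarrow>
        (\<lambda>\<epsilon>. msd_tilde N a sr sw (P + \<epsilon> \<cdot>\<^sub>m deltaP N i j) \<alpha> - msd_tilde N a sr sw P \<alpha>
              - a\<^sup>2 * \<alpha>\<^sup>2 * sw\<^sup>2 / real N * (\<Sum>k<N. hk N a \<alpha> \<epsilon> (lam k) (v k) i j))
        \<in> O[at_right 0](\<lambda>\<epsilon>. \<epsilon>\<^sup>2))
     \<and>
     (\<forall>\<epsilon>>0.
        let NE = {(i, j). i < j \<and> j < N \<and> \<not> P $$ (i, j) > 0};
            \<zeta>max = Max ((\<lambda>k. \<bar>lam k - \<alpha>\<bar>) ` {1..<N})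
        in Min ((\<lambda>(i, j). \<Sum>k<N. hk N a \<alpha> \<epsilon> (lam k) (v k) i j) ` NE)
           \<ge> Min ((\<lambda>(i, j). - 2 * \<epsilon> * ((1 - \<alpha>\<^sup>2 * a\<^sup>2) * (P $$ (i, i) + P $$ (j, j))
                   + a\<^sup>2 * \<alpha> * ((P * P) $$ (i, i) + (P * P) $$ (j, j) - 2 * (P * P) $$ (i, j)))
                   / (1 - a\<^sup>2 * \<zeta>max\<^sup>2)\<^sup>2) ` NE))"
proof -
  \<comment> \<open>Symmetry of \<open>P\<close> follows from the orthonormal eigenbasis.\<close>
  interpret orthonormal_eigenbasis N P lam v
    using P_carrier v_carrier v_eig v_orth by unfold_locales
  have "\<bar>a * (lam k - \<alpha>)\<bar> < 1" if "k < N" for k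
    using eigenvalue_bound_by_spectral_radius[OF P_carrier eigvec_carrier[OF that] eigvec_nonzero[OF that]
        v_eig[OF that] rho] .
  then have stable: "\<forall>k<N. \<bar>a * (lam k - \<alpha>)\<bar> < 1" by blast
  have "\<bar>a\<bar> * \<alpha> < 1" using a_bound alpha by (simp add: field_simps)
  then have "(\<bar>a\<bar> * \<alpha>)\<^sup>2 \<le> 1" using alpha by (simp add: abs_square_le_1 abs_mult)
  then have \<alpha>a: "\<alpha>\<^sup>2 * a\<^sup>2 \<le> 1" by (simp add: power_mult_distrib mult.commute)
  have consensus: "v 0 $ i = v 0 $ j" if "i < N" "j < N" for i j
    using that by (simp add: v0)
  show ?thesis
  proof (intro conjI allI impI)
    fix i j :: nat assume "i < j \<and> j < N \<and> \<not> P $$ (i, j) > 0"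
    then show "(\<lambda>\<epsilon>. msd_tilde N a sr sw (P + \<epsilon> \<cdot>\<^sub>m deltaP N i j) \<alpha> - msd_tilde N a sr sw P \<alpha>
              - a\<^sup>2 * \<alpha>\<^sup>2 * sw\<^sup>2 / real N * (\<Sum>k<N. hk N a \<alpha> \<epsilon> (lam k) (v k) i j))
        \<in> O[at_right 0](\<lambda>\<epsilon>. \<epsilon>\<^sup>2)"
      by (intro msd_tilde_first_order_expansion[OF stable]) auto
  next
    fix \<epsilon> :: real assume "\<epsilon> > 0"
    then show "let NE = {(i, j). i < j \<and> j < N \<and> \<not> P $$ (i, j) > 0};
            \<zeta>max = Max ((\<lambda>k. \<bar>lam k - \<alpha>\<bar>) ` {1..<N})
        in Min ((\<lambda>(i, j). \<Sum>k<N. hk N a \<alpha> \<epsilon> (lam k) (v k) i j) ` NE)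
           \<ge> Min ((\<lambda>(i, j). - 2 * \<epsilon> * ((1 - \<alpha>\<^sup>2 * a\<^sup>2) * (P $$ (i, i) + P $$ (j, j))
                   + a\<^sup>2 * \<alpha> * ((P * P) $$ (i, i) + (P * P) $$ (j, j) - 2 * (P * P) $$ (i, j)))
                   / (1 - a\<^sup>2 * \<zeta>max\<^sup>2)\<^sup>2) ` NE)"
      using N alpha by (intro Min_sum_hk_lower_bound \<alpha>a P_nonneg P_psd stable consensus nonedge_exists) auto
  qed
qed

end
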